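(* Let $(X,b)$ be a weighted graph and $V\colon X\to\mathbb R$. If $q_V$ is nonnegative, then for every $h\in C_c(X)$ with $q_V(h)=0$ the set $\{x\in X\mid h(x)\neq0\}$ is a union of connected components of $(X,b)$. In particular, if all connected components of $(X,b)$ are infinite, every such $h$ vanishes identically.
   Context: Weighted graph: $X$ countable, $b\colon X\times X\to[0,\infty)$ with $b(x,x)=0$, $b(x,y)=b(y,x)$, $\sum_y b(x,y)<\infty$ for all $x$. Connected components are equivalence classes of "connected by a finite path $x_1,\dots,x_n$ with $b(x_i,x_{i+1})>0$". $C_c(X)$ is the set of finitely supported complex functions on $X$. $q_V(f)=\frac12\sum_{x,y}b(x,y)|f(x)-f(y)|^2+\sum_x|f(x)|^2V(x)$ for $f\in C_c(X)$; $q_V$ is nonnegative if $q_V(f)\ge0$ for all $f\in C_c(X)$. *)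

theory Defs
  imports "HOL-Analysis.Analysis"
begin

text \<open>A weighted graph on a countable vertex type 'a (the vertex set X is UNIV).\<close>
definition weighted_graph :: "('a::countable \<Rightarrow> 'a \<Rightarrow> real) \<Rightarrow> bool" where
  "weighted_graph b \<longleftrightarrow>
     (\<forall>x y. b x y \<ge> 0) \<and> (\<forall>x. b x x = 0) \<and> (\<forall>x y. b x y = b y x) \<and>
     (\<forall>x. (\<lambda>y. b x y) summable_on UNIV)"

text \<open>x and y are connected: there is a finite path x = x1, ..., xn = y with b(xi,xi+1) > 0
  (the path of length one gives reflexivity).\<close>
definition graph_connected :: "('a \<Rightarrow> 'a \<Rightarrow> real) \<Rightarrow> 'a \<Rightarrow> 'a \<Rightarrow> bool" where
  "graph_connected b = (\<lambda>x y. b x y > 0)\<^sup>*\<^sup>*"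

definition component :: "('a \<Rightarrow> 'a \<Rightarrow> real) \<Rightarrow> 'a \<Rightarrow> 'a set" where
  "component b x = {y. graph_connected b x y}"

definition components :: "('a \<Rightarrow> 'a \<Rightarrow> real) \<Rightarrow> 'a set set" where
  "components b = range (component b)"

definition Cc :: "('a \<Rightarrow> complex) set" where
  "Cc = {f. finite {x. f x \<noteq> 0}}"

definition qV :: "('a \<Rightarrow> 'a \<Rightarrow> real) \<Rightarrow> ('a \<Rightarrow> real) \<Rightarrow> ('a \<Rightarrow> complex) \<Rightarrow> real" where
  "qV b V f = (1/2) * (\<Sum>\<^sub>\<infinity>(x,y)\<in>UNIV. b x y * (cmod (f x - f y))\<^sup>2)
              + (\<Sum>\<^sub>\<infinity>x\<in>UNIV. (cmod (f x))\<^sup>2 * V x)"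

definition qV_nonneg :: "('a \<Rightarrow> 'a \<Rightarrow> real) \<Rightarrow> ('a \<Rightarrow> real) \<Rightarrow> bool" where
  "qV_nonneg b V \<longleftrightarrow> (\<forall>f\<in>Cc. qV b V f \<ge> 0)"

end

theory Submission
  imports Defs
begin

text \<open>
  Since \<open>|h|\<close> has no larger energy than \<open>h\<close>, we may assume \<open>h \<ge> 0\<close>. A minimiser of the nonnegative
  form \<open>q\<^sub>V\<close> satisfies the Euler--Lagrange equation
  \<open>\<Sum>\<^sub>y b(x,y) h(y) = (deg(x) + V(x)) h(x)\<close> at every vertex, obtained by perturbing \<open>h\<close> with a
  multiple of a point mass. Where \<open>h(x) = 0\<close> the left-hand side, a sum of nonnegative terms, must
  vanish, so \<open>h\<close> vanishes at all neighbours of \<open>x\<close>; hence the support of \<open>h\<close> is closed under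
  connectivity. A finitely supported \<open>h\<close> then cannot be nonzero on an infinite component.
\<close>

lemma weighted_graph_nonneg: "weighted_graph b \<Longrightarrow> 0 \<le> b x y"
  and weighted_graph_sym: "weighted_graph b \<Longrightarrow> b x y = b y x"
  and weighted_graph_diag: "weighted_graph b \<Longrightarrow> b x x = 0"
  and weighted_graph_summable: "weighted_graph b \<Longrightarrow> (\<lambda>y. b x y) summable_on UNIV"
  unfolding weighted_graph_def by blast+

lemma cmod_of_real_diff [simp]: "cmod (of_real a - of_real c) = \<bar>a - c\<bar>"
  by (metis norm_of_real of_real_diff)

lemma quadratic_nonneg_imp_linear_coeff_zero:
  fixes a c :: real
  assumes "\<And>t. 0 \<le> a * t\<^sup>2 + c * t"
  shows "c = 0"
proof (rule ccontr)
  assume "c \<noteq> 0"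
  define s where "s = 1 / (\<bar>a\<bar> + 1)"
  have "0 < s" "a * s < 1"
    by (auto simp: s_def field_simps)
  have "a * (- c * s)\<^sup>2 + c * (- c * s) = c\<^sup>2 * s * (a * s - 1)"
    by (simp add: power2_eq_square algebra_simps)
  also have "\<dots> < 0"
    using \<open>c \<noteq> 0\<close> \<open>0 < s\<close> \<open>a * s < 1\<close> by (intro mult_pos_neg) auto
  finally show False
    using assms[of "- c * s"] by simp
qed

lemma has_sum_row:
  assumes "(f has_sum s) UNIV"
  shows "((\<lambda>(x, y). if x = a then f y else 0) has_sum s) UNIV"
proof -
  have "((\<lambda>(x, y). if x = a then f y else 0) \<circ> Pair a) = f"
    by auto
  then have "((\<lambda>(x, y). if x = a then f y else 0) has_sum s) (Pair a ` UNIV)"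
    using has_sum_reindex[of "Pair a" UNIV "\<lambda>(x, y). if x = a then f y else 0" s] assms
    by (simp add: inj_on_def)
  then show ?thesis
    by (rule has_sum_cong_neutral[THEN iffD1, rotated -1]) auto
qed

lemma summable_on_pairs_if_rows:
  fixes g :: "'a \<times> 'a \<Rightarrow> real"
  assumes "finite F"
    and sym: "\<And>x y. g (x, y) = g (y, x)"
    and nonneg: "\<And>p. 0 \<le> g p"
    and rows: "\<And>x. x \<in> F \<Longrightarrow> (\<lambda>y. g (x, y)) summable_on UNIV"
    and vanish: "\<And>x y. x \<notin> F \<Longrightarrow> y \<notin> F \<Longrightarrow> g (x, y) = 0"
  shows "g summable_on UNIV"
proof -
  have "g summable_on F \<times> UNIV"
    using rows nonneg \<open>finite F\<close>
    by (intro summable_on_SigmaI[where g = "\<lambda>x. \<Sum>\<^sub>\<infinity>y. g (x, y)"]) auto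
  moreover have "(\<lambda>(x, y). g (y, x)) = g"
    using sym by auto
  ultimately have "g summable_on F \<times> UNIV \<union> UNIV \<times> F"
    using summable_on_swap[of g F UNIV] by (auto intro: summable_on_union)
  then show ?thesis
    by (rule summable_on_cong_neutral[THEN iffD1, rotated -1]) (auto intro: vanish)
qed

lemma energy_summable:
  assumes wg: "weighted_graph b" and "f \<in> Cc"
  shows "(\<lambda>(x, y). b x y * (cmod (f x - f y))\<^sup>2) summable_on UNIV"
proof (rule summable_on_pairs_if_rows[where F = "{x. f x \<noteq> 0}"])
  show "finite {x. f x \<noteq> 0}"
    using \<open>f \<in> Cc\<close> by (simp add: Cc_def)
  show "(\<lambda>y. (\<lambda>(x, y). b x y * (cmod (f x - f y))\<^sup>2) (x, y)) summable_on UNIV" for x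
  proof -
    have "(\<lambda>y. (cmod (f x))\<^sup>2 * b x y) summable_on UNIV"
      by (intro summable_on_cmult_right weighted_graph_summable[OF wg])
    then have "(\<lambda>y. (cmod (f x))\<^sup>2 * b x y) summable_on - {y. f y \<noteq> 0}"
      by (rule summable_on_subset) simp
    then have "(\<lambda>y. b x y * (cmod (f x - f y))\<^sup>2) summable_on - {y. f y \<noteq> 0}"
      by (rule summable_on_cong[THEN iffD1, rotated]) simp
    then have "(\<lambda>y. b x y * (cmod (f x - f y))\<^sup>2) summable_on - {y. f y \<noteq> 0} \<union> {y. f y \<noteq> 0}"
      using \<open>finite {x. f x \<noteq> 0}\<close> by (intro summable_on_union) auto
    then show ?thesis
      by simp
  qed
  show "(\<lambda>(x, y). b x y * (cmod (f x - f y))\<^sup>2) (x, y)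
      = (\<lambda>(x, y). b x y * (cmod (f x - f y))\<^sup>2) (y, x)" for x y
    by (simp add: weighted_graph_sym[OF wg, of x y] norm_minus_commute)
qed (auto simp: weighted_graph_nonneg[OF wg])

lemma qV_norm_le:
  assumes wg: "weighted_graph b" and "f \<in> Cc"
  shows "qV b V (\<lambda>x. of_real (cmod (f x))) \<le> qV b V f"
proof -
  have "(\<lambda>x. complex_of_real (cmod (f x))) \<in> Cc"
    using \<open>f \<in> Cc\<close> by (simp add: Cc_def)
  moreover have "b x y * (cmod (of_real (cmod (f x)) - of_real (cmod (f y))))\<^sup>2
      \<le> b x y * (cmod (f x - f y))\<^sup>2" for x y
  proof -
    have "(cmod (f x) - cmod (f y))\<^sup>2 \<le> (cmod (f x - f y))\<^sup>2"
      by (metis abs_ge_zero norm_triangle_ineq3 power2_abs power_mono)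
    then show ?thesis
      by (simp add: mult_left_mono weighted_graph_nonneg[OF wg])
  qed
  ultimately have "(\<Sum>\<^sub>\<infinity>(x, y). b x y * (cmod (of_real (cmod (f x)) - of_real (cmod (f y))))\<^sup>2)
      \<le> (\<Sum>\<^sub>\<infinity>(x, y). b x y * (cmod (f x - f y))\<^sup>2)"
    using \<open>f \<in> Cc\<close> by (intro infsum_mono energy_summable[OF wg]) auto
  then show ?thesis
    by (simp add: qV_def)
qed

lemma qV_of_real:
  "qV b V (\<lambda>x. of_real (v x))
    = 1/2 * (\<Sum>\<^sub>\<infinity>(x, y). b x y * (v x - v y)\<^sup>2) + (\<Sum>\<^sub>\<infinity>x. (v x)\<^sup>2 * V x)"
  by (simp add: qV_def)

lemma energy_add_point_mass:
  fixes u :: "'a::countable \<Rightarrow> real" and z :: 'a and t :: real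
  assumes wg: "weighted_graph b" and u: "finite {x. u x \<noteq> 0}"
  defines "w x \<equiv> u x + (if x = z then t else 0)"
  shows "(\<Sum>\<^sub>\<infinity>(x, y). b x y * (w x - w y)\<^sup>2)
    = (\<Sum>\<^sub>\<infinity>(x, y). b x y * (u x - u y)\<^sup>2)
      + 2 * ((t\<^sup>2 + 2 * t * u z) * (\<Sum>\<^sub>\<infinity>y. b z y) - 2 * t * (\<Sum>\<^sub>\<infinity>y. b z y * u y))"
    (is "infsum ?Ew UNIV = infsum ?Eu UNIV + 2 * ?r")
proof -
  \<comment> \<open>Only the edges at \<open>z\<close> change: \<open>D\<close> is the change along row \<open>z\<close>, its transpose the change along column \<open>z\<close>.\<close>
  define D where "D = (\<lambda>(x, y). if x = z then b z y * (t\<^sup>2 + 2 * t * (u z - u y)) else 0)"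
  have "(\<lambda>x. complex_of_real (u x)) \<in> Cc"
    using u by (simp add: Cc_def)
  from energy_summable[OF wg this] have "?Eu summable_on UNIV"
    by simp
  have "(\<lambda>y. b z y * u y) summable_on UNIV"
    by (rule finite_nonzero_values_imp_summable_on, rule finite_subset[OF _ u]) auto
  then have "((\<lambda>y. (t\<^sup>2 + 2 * t * u z) * b z y + (- 2 * t) * (b z y * u y))
      has_sum ((t\<^sup>2 + 2 * t * u z) * (\<Sum>\<^sub>\<infinity>y. b z y) + (- 2 * t) * (\<Sum>\<^sub>\<infinity>y. b z y * u y))) UNIV"
    by (intro has_sum_add has_sum_cmult_right has_sum_infsum weighted_graph_summable[OF wg])
  then have "((\<lambda>y. b z y * (t\<^sup>2 + 2 * t * (u z - u y))) has_sum ?r) UNIV"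
    by (simp add: algebra_simps)
  then have D: "(D has_sum ?r) UNIV"
    unfolding D_def by (rule has_sum_row)
  then have "((\<lambda>(x, y). D (y, x)) has_sum ?r) UNIV"
    using has_sum_swap[of D UNIV UNIV ?r] by simp
  with D \<open>?Eu summable_on UNIV\<close>
  have "((\<lambda>p. ?Eu p + D p + D (snd p, fst p)) has_sum (infsum ?Eu UNIV + ?r + ?r)) UNIV"
    by (intro has_sum_add has_sum_infsum) (auto simp: case_prod_unfold)
  moreover have "?Eu (x, y) + D (x, y) + D (y, x) = ?Ew (x, y)" for x y
    using weighted_graph_diag[OF wg, of z] weighted_graph_sym[OF wg, of x y]
    by (cases "x = z"; cases "y = z") (simp_all add: D_def w_def power2_eq_square algebra_simps)
  then have "(\<lambda>p. ?Eu p + D p + D (snd p, fst p)) = ?Ew"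
    by (auto simp: fun_eq_iff)
  ultimately show ?thesis
    by (simp add: infsumI)
qed

lemma potential_add_point_mass:
  fixes u :: "'a \<Rightarrow> real"
  assumes "finite {x. u x \<noteq> 0}"
  shows "(\<Sum>\<^sub>\<infinity>x. (u x + (if x = z then t else 0))\<^sup>2 * V x)
    = (\<Sum>\<^sub>\<infinity>x. (u x)\<^sup>2 * V x) + (t\<^sup>2 + 2 * t * u z) * V z"
proof -
  have "(\<lambda>x. (u x)\<^sup>2 * V x) summable_on UNIV"
    by (rule finite_nonzero_values_imp_summable_on, rule finite_subset[OF _ assms]) auto
  moreover have "((\<lambda>x. if x = z then (t\<^sup>2 + 2 * t * u z) * V z else 0)
      has_sum (t\<^sup>2 + 2 * t * u z) * V z) UNIV"
    by (rule has_sum_finite_neutralI[of "{z}"]) auto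
  ultimately have "((\<lambda>x. (u x)\<^sup>2 * V x + (if x = z then (t\<^sup>2 + 2 * t * u z) * V z else 0))
      has_sum ((\<Sum>\<^sub>\<infinity>x. (u x)\<^sup>2 * V x) + (t\<^sup>2 + 2 * t * u z) * V z)) UNIV"
    by (intro has_sum_add has_sum_infsum)
  moreover have "(\<lambda>x. (u x)\<^sup>2 * V x + (if x = z then (t\<^sup>2 + 2 * t * u z) * V z else 0))
      = (\<lambda>x. (u x + (if x = z then t else 0))\<^sup>2 * V x)"
    by (auto simp: power2_eq_square algebra_simps)
  ultimately show ?thesis
    by (simp add: infsumI)
qed

lemma qV_add_point_mass:
  fixes u :: "'a::countable \<Rightarrow> real"
  assumes "weighted_graph b" and "finite {x. u x \<noteq> 0}"
  shows "qV b V (\<lambda>x. of_real (u x + (if x = z then t else 0)))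
    = qV b V (\<lambda>x. of_real (u x)) + t\<^sup>2 * ((\<Sum>\<^sub>\<infinity>y. b z y) + V z)
      + 2 * t * (((\<Sum>\<^sub>\<infinity>y. b z y) + V z) * u z - (\<Sum>\<^sub>\<infinity>y. b z y * u y))"
  unfolding qV_of_real energy_add_point_mass[OF assms] potential_add_point_mass[OF assms(2)]
  by (simp add: algebra_simps)

lemma qV_zero_imp_harmonic:
  fixes u :: "'a::countable \<Rightarrow> real"
  assumes wg: "weighted_graph b" and "qV_nonneg b V" and u: "finite {x. u x \<noteq> 0}"
    and "qV b V (\<lambda>x. of_real (u x)) = 0"
  shows "(\<Sum>\<^sub>\<infinity>y. b z y * u y) = ((\<Sum>\<^sub>\<infinity>y. b z y) + V z) * u z"
proof -
  have "0 \<le> ((\<Sum>\<^sub>\<infinity>y. b z y) + V z) * t\<^sup>2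
      + 2 * (((\<Sum>\<^sub>\<infinity>y. b z y) + V z) * u z - (\<Sum>\<^sub>\<infinity>y. b z y * u y)) * t" for t
  proof -
    have "(\<lambda>x. complex_of_real (u x + (if x = z then t else 0))) \<in> Cc"
      unfolding Cc_def by (auto intro: finite_subset[of _ "insert z {x. u x \<noteq> 0}"] u)
    with \<open>qV_nonneg b V\<close> have "0 \<le> qV b V (\<lambda>x. complex_of_real (u x + (if x = z then t else 0)))"
      unfolding qV_nonneg_def by blast
    then show ?thesis
      unfolding qV_add_point_mass[OF wg u] \<open>qV b V (\<lambda>x. of_real (u x)) = 0\<close>
      by (simp add: algebra_simps)
  qed
  then have "2 * (((\<Sum>\<^sub>\<infinity>y. b z y) + V z) * u z - (\<Sum>\<^sub>\<infinity>y. b z y * u y)) = 0"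
    by (rule quadratic_nonneg_imp_linear_coeff_zero)
  then show ?thesis
    by simp
qed

lemma qV_zero_vanishes_at_neighbour:
  assumes wg: "weighted_graph b" and nonneg: "qV_nonneg b V" and h: "h \<in> Cc"
    and "qV b V h = 0" and "h x = 0" and "0 < b x y"
  shows "h y = 0"
proof -
  define u where "u y = cmod (h y)" for y
  have u: "finite {y. u y \<noteq> 0}"
    using h by (simp add: u_def Cc_def)
  have "qV b V (\<lambda>y. of_real (u y)) = 0"
  proof (rule antisym)
    show "qV b V (\<lambda>y. of_real (u y)) \<le> 0"
      using qV_norm_le[OF wg h, of V] \<open>qV b V h = 0\<close> by (simp add: u_def)
    show "0 \<le> qV b V (\<lambda>y. of_real (u y))"
      using nonneg u by (simp add: qV_nonneg_def Cc_def)
  qed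
  then have "(\<Sum>\<^sub>\<infinity>y. b x y * u y) = 0"
    using qV_zero_imp_harmonic[OF wg nonneg u, of x] \<open>h x = 0\<close> by (simp add: u_def)
  moreover have "(\<lambda>y. b x y * u y) summable_on UNIV"
    by (rule finite_nonzero_values_imp_summable_on, rule finite_subset[OF _ u]) auto
  ultimately have "b x y * u y = 0"
    by (intro nonneg_infsum_le_0D[where A = UNIV]) (auto simp: u_def weighted_graph_nonneg[OF wg])
  with \<open>0 < b x y\<close> show ?thesis
    by (simp add: u_def)
qed

lemma qV_zero_support_closed:
  assumes wg: "weighted_graph b" and nonneg: "qV_nonneg b V" and h: "h \<in> Cc"
    and q0: "qV b V h = 0" and "h x \<noteq> 0" and "graph_connected b x y"
  shows "h y \<noteq> 0"
  using \<open>graph_connected b x y\<close> unfolding graph_connected_def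
proof (induction rule: rtranclp_induct)
  case base
  show ?case using \<open>h x \<noteq> 0\<close> .
next
  case (step y z)
  then have "0 < b z y"
    using weighted_graph_sym[OF wg] by simp
  with step.IH show ?case
    using qV_zero_vanishes_at_neighbour[OF wg nonneg h q0] by blast
qed

lemma eq_Union_components_if_closed:
  assumes "\<And>x y. x \<in> S \<Longrightarrow> graph_connected b x y \<Longrightarrow> y \<in> S"
  shows "S = \<Union> (component b ` S)"
  using assms by (auto simp: component_def graph_connected_def)

theorem lemma4p4:
  fixes b :: "'a::countable \<Rightarrow> 'a \<Rightarrow> real" and V :: "'a \<Rightarrow> real"
  assumes "weighted_graph b" and "qV_nonneg b V"
  shows "(\<forall>h\<in>Cc. qV b V h = 0 \<longrightarrow>
           (\<exists>\<C>\<subseteq>components b. {x. h x \<noteq> 0} = \<Union>\<C>)) \<and>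
         ((\<forall>C\<in>components b. infinite C) \<longrightarrow>
           (\<forall>h\<in>Cc. qV b V h = 0 \<longrightarrow> h = (\<lambda>_. 0)))"
proof (intro conjI ballI impI)
  have support: "{x. h x \<noteq> 0} = \<Union> (component b ` {x. h x \<noteq> 0})"
    if "h \<in> Cc" "qV b V h = 0" for h
    by (rule eq_Union_components_if_closed) (use qV_zero_support_closed[OF assms that] in blast)
  show "\<exists>\<C>\<subseteq>components b. {x. h x \<noteq> 0} = \<Union>\<C>" if "h \<in> Cc" "qV b V h = 0" for h
  proof (intro exI conjI)
    show "component b ` {x. h x \<noteq> 0} \<subseteq> components b"
      by (auto simp: components_def)
  qed (rule support[OF that])
  show "h = (\<lambda>_. 0)"
    if "\<forall>C\<in>components b. infinite C" "h \<in> Cc" "qV b V h = 0" for h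
  proof (rule ccontr)
    assume "h \<noteq> (\<lambda>_. 0)"
    then obtain x where "h x \<noteq> 0"
      by auto
    then have "component b x \<subseteq> {x. h x \<noteq> 0}"
      using support[OF that(2,3)] by blast
    moreover have "finite {x. h x \<noteq> 0}"
      using \<open>h \<in> Cc\<close> by (simp add: Cc_def)
    moreover have "infinite (component b x)"
      using that(1) by (simp add: components_def)
    ultimately show False
      using finite_subset by blast
  qed
qed

end
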